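(* Let $M\ge1$, $T\ge M$, $n\ge2$ be integers and $p=\frac1{M+1}$. Let $\mathbf{c}_1,\dots,\mathbf{c}_T\in\{0,1\}^n$ be random words whose $Tn$ bits are independent, each equal to $1$ with probability $p$. Let $E_{\mathrm{syn}}$ be the event that there exist $t\in\{1,\dots,T\}$, $d\in\{1,\dots,n-1\}$, a set $S\subseteq\{1,\dots,T\}\setminus\{t\}$ with $|S|=M-1$, and shifts $s_u\in\{0,\dots,n-1\}$ ($u\in S$) such that $\sigma_d(\mathbf{c}_t)\vee\bigvee_{u\in S}\sigma_{s_u}(\mathbf{c}_u)$ covers $\mathbf{c}_t$. Then \[\Pr(E_{\mathrm{syn}})\le\exp\!\Big(M\ln T+M\ln n-\tfrac{n}{M+1}\mathrm{e}^{-1}\Big).\]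
   Context: $\vee$ is componentwise Boolean OR (an empty OR is the all-zero vector). A vector $\mathbf{y}$ covers $\mathbf{z}$ if $y_i\ge z_i$ for all $i$. For $\mathbf{c}\in\{0,1\}^n$ and $s\in\{0,\dots,n-1\}$, $\sigma_s(\mathbf{c})$ is defined by $(\sigma_s(\mathbf{c}))_i=c_{i-s}$ if $i>s$ and $0$ otherwise. *)

theory Defs
  imports "HOL-Probability.Probability"
begin

text \<open>Binary words of length n are functions nat => bool, read on positions 1..n
  (True = bit 1). The shift: (sigma_s c)_i = c_(i-s) if i > s, else 0.\<close>
definition shiftw :: "nat \<Rightarrow> (nat \<Rightarrow> bool) \<Rightarrow> nat \<Rightarrow> bool" where
  "shiftw s c i = (s < i \<and> c (i - s))"

definition covers :: "nat \<Rightarrow> (nat \<Rightarrow> bool) \<Rightarrow> (nat \<Rightarrow> bool) \<Rightarrow> bool" where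
  "covers n y z = (\<forall>i\<in>{1..n}. z i \<longrightarrow> y i)"

definition bigor :: "'u set \<Rightarrow> ('u \<Rightarrow> nat \<Rightarrow> bool) \<Rightarrow> nat \<Rightarrow> bool" where
  "bigor S w i = (\<exists>u\<in>S. w u i)"

text \<open>The event E_syn for the family of words c (word t is \<lambda>i. c (t,i)).\<close>
definition E_syn :: "nat \<Rightarrow> nat \<Rightarrow> nat \<Rightarrow> (nat \<times> nat \<Rightarrow> bool) \<Rightarrow> bool" where
  "E_syn M T n c = (\<exists>t\<in>{1..T}. \<exists>d\<in>{1..n-1}. \<exists>S. S \<subseteq> {1..T} - {t} \<and> card S = M - 1 \<and>
     (\<exists>s. (\<forall>u\<in>S. s u \<in> {0..n-1}) \<and>
        covers n (\<lambda>i. shiftw d (\<lambda>j. c (t, j)) i \<or> bigor S (\<lambda>u. shiftw (s u) (\<lambda>j. c (u, j))) i)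
                 (\<lambda>j. c (t, j))))"

definition words_pmf :: "nat \<Rightarrow> nat \<Rightarrow> real \<Rightarrow> (nat \<times> nat \<Rightarrow> bool) pmf" where
  "words_pmf T n p = Pi_pmf ({1..T} \<times> {1..n}) False (\<lambda>_. bernoulli_pmf p)"

end

theory Submission
  imports Defs
begin

(* Fix t, d, S and the shifts s. Covering fails at a position i as soon as c_t(i) = 1 while
   c_t(i - d) and all c_u(i - s_u) vanish, an event of probability p (1 - p)^M; these events are not
   independent, since the events at i and i + d share the bit c_t(i). Scanning the positions from
   left to right, the potential
     [c_t is covered on 1..k] * kappa^(number of ones of c_t in (k - d, k]),
     kappa = 1 / (1 - p q),  q = (1 - p)^|S|,
   loses a factor mu = 1 - p (1 - p)^M in conditional expectation each time position k + 1 and the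
   bits it newly reads are revealed: a one of c_t is stored as credit kappa until it is used to
   cover position i + d. So one configuration has probability at most mu^n <= exp (- n p / e), and
   there are at most T^M n^M configurations. *)

lemma nn_integral_Pi_pmf_chain_le:
  fixes Q :: "nat \<Rightarrow> 'a set" and \<Phi> :: "nat \<Rightarrow> ('a \<Rightarrow> 'b) \<Rightarrow> ennreal"
  assumes finite: "\<And>k. finite (Q k)" and mono: "\<And>k. Q k \<subseteq> Q (Suc k)"
    and init: "\<And>f. \<Phi> 0 f \<le> 1"
    and step: "\<And>k f. (\<integral>\<^sup>+g. \<Phi> (Suc k) (\<lambda>x. if x \<in> Q k then f x else g x)
                        \<partial>Pi_pmf (Q (Suc k) - Q k) dflt P) \<le> ennreal \<mu> * \<Phi> k f"
  shows "(\<integral>\<^sup>+f. \<Phi> m f \<partial>Pi_pmf (Q m) dflt P) \<le> ennreal \<mu> ^ m"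
proof (induction m)
  case 0
  have "(\<integral>\<^sup>+f. \<Phi> 0 f \<partial>Pi_pmf (Q 0) dflt P) \<le> (\<integral>\<^sup>+f. 1 \<partial>Pi_pmf (Q 0) dflt P)"
    by (intro nn_integral_mono init)
  then show ?case by (simp add: measure_pmf.emeasure_space_1)
next
  case (Suc m)
  have split: "Q (Suc m) = Q m \<union> (Q (Suc m) - Q m)" using mono[of m] by blast
  have "Pi_pmf (Q (Suc m)) dflt P = map_pmf (\<lambda>(f, g) x. if x \<in> Q m then f x else g x)
      (pair_pmf (Pi_pmf (Q m) dflt P) (Pi_pmf (Q (Suc m) - Q m) dflt P))"
    by (subst split, rule Pi_pmf_union) (use finite in auto)
  then have "(\<integral>\<^sup>+f. \<Phi> (Suc m) f \<partial>Pi_pmf (Q (Suc m)) dflt P)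
      = (\<integral>\<^sup>+f. \<integral>\<^sup>+g. \<Phi> (Suc m) (\<lambda>x. if x \<in> Q m then f x else g x)
          \<partial>Pi_pmf (Q (Suc m) - Q m) dflt P \<partial>Pi_pmf (Q m) dflt P)"
    by (simp add: nn_integral_pair_pmf')
  also have "\<dots> \<le> (\<integral>\<^sup>+f. ennreal \<mu> * \<Phi> m f \<partial>Pi_pmf (Q m) dflt P)"
    by (intro nn_integral_mono step)
  also have "\<dots> = ennreal \<mu> * (\<integral>\<^sup>+f. \<Phi> m f \<partial>Pi_pmf (Q m) dflt P)"
    by (simp add: nn_integral_cmult)
  also have "\<dots> \<le> ennreal \<mu> * ennreal \<mu> ^ m"
    by (intro mult_left_mono Suc.IH) auto
  finally show ?case by simp
qed

lemma prob_Pi_pmf_bernoulli_all_False: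
  assumes "finite A" "X \<subseteq> A" "0 \<le> p" "p \<le> 1"
  shows "measure_pmf.prob (Pi_pmf A False (\<lambda>_. bernoulli_pmf p)) {f. \<forall>x\<in>X. \<not> f x}
    = (1 - p) ^ card X"
proof -
  have "{f. \<forall>x\<in>X. \<not> f x} = Pi A (\<lambda>x. if x \<in> X then {False} else UNIV)"
    using assms(2) by (auto simp: Pi_def)
  then have "measure_pmf.prob (Pi_pmf A False (\<lambda>_. bernoulli_pmf p)) {f. \<forall>x\<in>X. \<not> f x}
      = (\<Prod>x\<in>A. measure_pmf.prob (bernoulli_pmf p) (if x \<in> X then {False} else UNIV))"
    using assms by (simp add: measure_Pi_pmf_Pi)
  also have "\<dots> = (\<Prod>x\<in>A. if x \<in> X then 1 - p else 1)"
    using assms by (intro prod.cong) (auto simp: measure_pmf_single)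
  also have "\<dots> = (1 - p) ^ card X"
    using assms by (simp add: prod.If_cases Int_absorb1)
  finally show ?thesis .
qed

lemma nn_integral_Pi_pmf_bernoulli_weight:
  assumes "finite N" "x\<^sub>0 \<in> N" "0 \<le> p" "p \<le> 1" "0 \<le> \<kappa>"
  shows "(\<integral>\<^sup>+g. ennreal (if g x\<^sub>0 then \<kappa> else 1) \<partial>Pi_pmf N False (\<lambda>_. bernoulli_pmf p))
    = ennreal (p * \<kappa> + (1 - p))"
proof -
  have "(\<integral>\<^sup>+g. ennreal (if g x\<^sub>0 then \<kappa> else 1) \<partial>Pi_pmf N False (\<lambda>_. bernoulli_pmf p))
      = (\<integral>\<^sup>+b. ennreal (if b then \<kappa> else 1) \<partial>map_pmf (\<lambda>g. g x\<^sub>0) (Pi_pmf N False (\<lambda>_. bernoulli_pmf p)))"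
    by simp
  also have "map_pmf (\<lambda>g. g x\<^sub>0) (Pi_pmf N False (\<lambda>_. bernoulli_pmf p)) = bernoulli_pmf p"
    using assms by (simp add: Pi_pmf_component)
  also have "(\<integral>\<^sup>+b. ennreal (if b then \<kappa> else 1) \<partial>bernoulli_pmf p) = ennreal (p * \<kappa> + (1 - p))"
    using assms by (subst ennreal_plus) (auto simp: ennreal_mult mult.commute)
  finally show ?thesis .
qed

lemma nn_integral_Pi_pmf_bernoulli_weight_unless_all_False:
  assumes "finite N" "x\<^sub>0 \<in> N" "X \<subseteq> N" "x\<^sub>0 \<notin> X" "0 \<le> p" "p \<le> 1" "0 \<le> \<kappa>"
  shows "(\<integral>\<^sup>+g. ennreal (if g x\<^sub>0 \<and> (\<forall>x\<in>X. \<not> g x) then 0 else if g x\<^sub>0 then \<kappa> else 1)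
      \<partial>Pi_pmf N False (\<lambda>_. bernoulli_pmf p))
    = ennreal (p * \<kappa> * (1 - (1 - p) ^ card X) + (1 - p))"
proof -
  let ?P = "Pi_pmf (N - {x\<^sub>0}) False (\<lambda>_. bernoulli_pmf p)"
  let ?A = "{f. \<forall>x\<in>X. \<not> f x}"
  have q: "0 \<le> (1 - p) ^ card X" "(1 - p) ^ card X \<le> 1"
    using assms by (auto intro: power_le_one)
  have "N = insert x\<^sub>0 (N - {x\<^sub>0})" using assms by auto
  then have "Pi_pmf N False (\<lambda>_. bernoulli_pmf p)
      = map_pmf (\<lambda>(y, f). f(x\<^sub>0 := y)) (pair_pmf (bernoulli_pmf p) ?P)"
    by (metis Pi_pmf_insert Diff_iff assms(1) finite_Diff insertI1)
  then have "(\<integral>\<^sup>+g. ennreal (if g x\<^sub>0 \<and> (\<forall>x\<in>X. \<not> g x) then 0 else if g x\<^sub>0 then \<kappa> else 1)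
      \<partial>Pi_pmf N False (\<lambda>_. bernoulli_pmf p))
    = (\<integral>\<^sup>+y. \<integral>\<^sup>+f. ennreal (if y \<and> (\<forall>x\<in>X. \<not> (f(x\<^sub>0 := y)) x) then 0 else if y then \<kappa> else 1)
        \<partial>?P \<partial>bernoulli_pmf p)"
    by (simp only: nn_integral_map_pmf nn_integral_pair_pmf' prod.case fun_upd_same)
  also have "\<dots> = (\<integral>\<^sup>+y. (if y then ennreal \<kappa> * emeasure ?P (UNIV - ?A) else 1) \<partial>bernoulli_pmf p)"
  proof (intro nn_integral_cong)
    fix y :: bool
    have "(\<integral>\<^sup>+f. ennreal (if \<forall>x\<in>X. \<not> (f(x\<^sub>0 := True)) x then 0 else \<kappa>) \<partial>?P)
        = (\<integral>\<^sup>+f. ennreal \<kappa> * indicator (UNIV - ?A) f \<partial>?P)"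
      using assms(4) by (intro nn_integral_cong) (auto simp: indicator_def)
    then show "(\<integral>\<^sup>+f. ennreal (if y \<and> (\<forall>x\<in>X. \<not> (f(x\<^sub>0 := y)) x) then 0 else if y then \<kappa> else 1)
        \<partial>?P) = (if y then ennreal \<kappa> * emeasure ?P (UNIV - ?A) else 1)"
      by (cases y) (simp_all add: nn_integral_cmult measure_pmf.emeasure_space_1)
  qed
  also have "emeasure ?P (UNIV - ?A) = ennreal (1 - (1 - p) ^ card X)"
  proof -
    have "measure_pmf.prob ?P ?A = (1 - p) ^ card X"
      using assms by (intro prob_Pi_pmf_bernoulli_all_False) auto
    then show ?thesis
      using measure_pmf.prob_compl[of ?A ?P] by (simp add: measure_pmf.emeasure_eq_measure)
  qed
  also have "(\<integral>\<^sup>+y. (if y then ennreal \<kappa> * ennreal (1 - (1 - p) ^ card X) else 1) \<partial>bernoulli_pmf p)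
      = ennreal \<kappa> * ennreal (1 - (1 - p) ^ card X) * ennreal p + 1 * ennreal (1 - p)"
    using assms by (subst nn_integral_bernoulli_pmf) auto
  also have "\<dots> = ennreal (p * \<kappa> * (1 - (1 - p) ^ card X) + (1 - p))"
    using assms q by (subst ennreal_plus) (auto simp: ennreal_mult[symmetric] mult_ac)
  finally show ?thesis .
qed

lemma measure_pmf_prob_UN_le:
  assumes "finite I" "real (card I) \<le> m" "\<And>i. i \<in> I \<Longrightarrow> measure_pmf.prob P (X i) \<le> b" "0 \<le> b"
  shows "measure_pmf.prob P (\<Union>i\<in>I. X i) \<le> m * b"
proof -
  have "measure_pmf.prob P (\<Union>i\<in>I. X i) \<le> (\<Sum>i\<in>I. measure_pmf.prob P (X i))"
    using assms(1) by (intro measure_UNION_le) auto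
  also have "\<dots> \<le> real (card I) * b"
    using assms(3) by (intro sum_bounded_above) auto
  also have "\<dots> \<le> m * b"
    using assms(2,4) by (rule mult_right_mono)
  finally show ?thesis .
qed

lemma potential_weight_bounds:
  fixes p q :: real
  assumes "0 \<le> p" "p < 1" "0 \<le> q" "q \<le> 1"
  shows "p * q < 1" "1 \<le> 1 / (1 - p * q)" "0 \<le> 1 - p * (1 - p) * q"
proof -
  show pq: "p * q < 1"
    using assms mult_left_le[of q p] by linarith
  then show "1 \<le> 1 / (1 - p * q)"
    using assms by (simp add: field_simps)
  have "p * (1 - p) * q \<le> 1"
    using assms by (intro mult_le_one) auto
  then show "0 \<le> 1 - p * (1 - p) * q"
    by simp
qed

(* This fixes kappa: the potential is an exact martingale at a position k + 1 with c_t(k + 1 - d) = 1. *)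
lemma potential_weight_balance:
  fixes p q :: real
  assumes "p * q < 1"
  shows "p * (1 / (1 - p * q)) + (1 - p) = 1 / (1 - p * q) * (1 - p * (1 - p) * q)"
  using assms by (simp add: field_simps)

lemma potential_weight_uncovered_le:
  fixes p q q' :: real
  assumes "0 \<le> p" "p < 1" "0 \<le> q" "q \<le> q'" "q' \<le> 1"
  shows "p * (1 / (1 - p * q)) * (1 - q') + (1 - p) \<le> 1 - p * (1 - p) * q"
proof -
  have pq: "0 < 1 - p * q" using assms mult_left_le[of q p] by linarith
  have "p * (1 / (1 - p * q)) * (1 - q') \<le> p * (1 / (1 - p * q)) * (1 - q)"
    using assms pq by (intro mult_left_mono) auto
  also have "\<dots> \<le> p * (1 - q + p * q)"
  proof -
    have "(1 - p * q) * (1 - q + p * q) - (1 - q) = p * (1 - p) * q * q"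
      by (simp add: algebra_simps)
    moreover have "0 \<le> p * (1 - p) * q * q" using assms by simp
    ultimately have "1 - q \<le> (1 - p * q) * (1 - q + p * q)" by linarith
    then show ?thesis using pq assms by (simp add: field_simps mult_left_mono)
  qed
  finally show ?thesis by (simp add: algebra_simps)
qed

lemma nn_integral_potential_step_le:
  fixes p q R :: real and a :: bool
  assumes N: "finite N" "x\<^sub>0 \<in> N" "X \<subseteq> N" "x\<^sub>0 \<notin> X"
    and p: "0 \<le> p" "p < 1" and q: "0 \<le> q" "q \<le> (1 - p) ^ card X" and R: "0 \<le> R"
  defines "\<kappa> \<equiv> 1 / (1 - p * q)" and "\<mu> \<equiv> 1 - p * (1 - p) * q"
  shows "(\<integral>\<^sup>+g. ennreal (if g x\<^sub>0 \<longrightarrow> a \<or> (\<exists>x\<in>X. g x) then (if g x\<^sub>0 then \<kappa> else 1) * R else 0)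
      \<partial>Pi_pmf N False (\<lambda>_. bernoulli_pmf p))
    \<le> ennreal (\<mu> * ((if a then \<kappa> else 1) * R))"
proof -
  let ?P = "Pi_pmf N False (\<lambda>_. bernoulli_pmf p)"
  have q_le_1: "(1 - p) ^ card X \<le> 1"
    using p by (simp add: power_le_one)
  then have "q \<le> 1"
    using q by linarith
  note bounds = potential_weight_bounds[OF p q(1) this]
  have \<kappa>: "1 \<le> \<kappa>"
    using bounds(2) by (simp add: \<kappa>_def)
  show ?thesis
  proof (cases a)
    case True
    have "(\<integral>\<^sup>+g. ennreal (if g x\<^sub>0 \<longrightarrow> a \<or> (\<exists>x\<in>X. g x) then (if g x\<^sub>0 then \<kappa> else 1) * R else 0) \<partial>?P)
        = (\<integral>\<^sup>+g. ennreal R * ennreal (if g x\<^sub>0 then \<kappa> else 1) \<partial>?P)"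
      using True R \<kappa> by (intro nn_integral_cong) (auto simp: ennreal_mult' mult.commute)
    also have "\<dots> = ennreal (R * (p * \<kappa> + (1 - p)))"
      using N p \<kappa> R by (simp add: nn_integral_cmult nn_integral_Pi_pmf_bernoulli_weight ennreal_mult)
    also have "R * (p * \<kappa> + (1 - p)) = \<mu> * ((if a then \<kappa> else 1) * R)"
      using True potential_weight_balance[OF bounds(1)] unfolding \<kappa>_def \<mu>_def by simp
    finally show ?thesis by simp
  next
    case False
    have "(\<integral>\<^sup>+g. ennreal (if g x\<^sub>0 \<longrightarrow> a \<or> (\<exists>x\<in>X. g x) then (if g x\<^sub>0 then \<kappa> else 1) * R else 0) \<partial>?P)
        = (\<integral>\<^sup>+g. ennreal R * ennreal (if g x\<^sub>0 \<and> (\<forall>x\<in>X. \<not> g x) then 0 else if g x\<^sub>0 then \<kappa> else 1) \<partial>?P)"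
      using False R \<kappa> by (intro nn_integral_cong) (auto simp: ennreal_mult' mult.commute)
    also have "\<dots> = ennreal (R * (p * \<kappa> * (1 - (1 - p) ^ card X) + (1 - p)))"
      using N p \<kappa> R q_le_1
      by (simp add: nn_integral_cmult nn_integral_Pi_pmf_bernoulli_weight_unless_all_False ennreal_mult)
    also have "\<dots> \<le> ennreal (R * \<mu>)"
    proof (intro ennreal_leI mult_left_mono[OF _ R])
      show "p * \<kappa> * (1 - (1 - p) ^ card X) + (1 - p) \<le> \<mu>"
        using potential_weight_uncovered_le[OF p q(1) q(2)] p
        unfolding \<kappa>_def \<mu>_def by (simp add: power_le_one)
    qed
    finally show ?thesis using False by (simp add: mult.commute)
  qed
qed

definition covered_upto ::
    "nat \<Rightarrow> nat \<Rightarrow> nat set \<Rightarrow> (nat \<Rightarrow> nat) \<Rightarrow> nat \<Rightarrow> (nat \<times> nat \<Rightarrow> bool) \<Rightarrow> bool" where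
  "covered_upto t d S s k c \<longleftrightarrow>
     (\<forall>i\<in>{1..k}. c (t, i) \<longrightarrow> d < i \<and> c (t, i - d) \<or> (\<exists>u\<in>S. s u < i \<and> c (u, i - s u)))"

definition revealed :: "nat \<Rightarrow> nat set \<Rightarrow> (nat \<Rightarrow> nat) \<Rightarrow> nat \<Rightarrow> (nat \<times> nat) set" where
  "revealed t S s k = {(u, j). 1 \<le> j \<and> (u = t \<and> j \<le> k \<or> u \<in> S \<and> j + s u \<le> k)}"

definition window :: "nat \<Rightarrow> nat \<Rightarrow> nat set" where
  "window d k = {j. 1 \<le> j \<and> j \<le> k \<and> k < j + d}"

definition potential ::
    "nat \<Rightarrow> nat \<Rightarrow> nat set \<Rightarrow> (nat \<Rightarrow> nat) \<Rightarrow> real \<Rightarrow> nat \<Rightarrow> (nat \<times> nat \<Rightarrow> bool) \<Rightarrow> real" where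
  "potential t d S s \<kappa> k c =
     (if covered_upto t d S s k c then \<Prod>j\<in>window d k. if c (t, j) then \<kappa> else 1 else 0)"

lemma finite_revealed: "finite S \<Longrightarrow> finite (revealed t S s k)"
  by (rule finite_subset[of _ "insert t S \<times> {..k}"]) (auto simp: revealed_def)

lemma revealed_mono: "revealed t S s k \<subseteq> revealed t S s (Suc k)"
  by (auto simp: revealed_def)

lemma finite_window [simp]: "finite (window d k)"
  by (rule finite_subset[of _ "{..k}"]) (auto simp: window_def)

lemma covered_upto_cong:
  assumes "\<And>x. x \<in> revealed t S s k \<Longrightarrow> c x = c' x"
  shows "covered_upto t d S s k c = covered_upto t d S s k c'"
proof -
  have t: "c (t, j) = c' (t, j)" if "1 \<le> j" "j \<le> k" for j
    using that assms by (simp add: revealed_def)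
  have u: "c (u, j) = c' (u, j)" if "u \<in> S" "1 \<le> j" "j + s u \<le> k" for u j
    using that assms by (simp add: revealed_def)
  show ?thesis
    unfolding covered_upto_def
  proof (intro ball_cong refl)
    fix i assume i: "i \<in> {1..k}"
    have "c (t, i) = c' (t, i)" "d < i \<longrightarrow> c (t, i - d) = c' (t, i - d)"
      using t i by auto
    moreover have "\<forall>u\<in>S. s u < i \<longrightarrow> c (u, i - s u) = c' (u, i - s u)"
      using u i by auto
    ultimately show "(c (t, i) \<longrightarrow> d < i \<and> c (t, i - d) \<or> (\<exists>u\<in>S. s u < i \<and> c (u, i - s u))) =
        (c' (t, i) \<longrightarrow> d < i \<and> c' (t, i - d) \<or> (\<exists>u\<in>S. s u < i \<and> c' (u, i - s u)))"
      by auto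
  qed
qed

lemma covered_upto_0 [simp]: "covered_upto t d S s 0 c"
  by (simp add: covered_upto_def Suc_le_eq)

lemma covered_upto_Suc:
  "covered_upto t d S s (Suc k) c \<longleftrightarrow> covered_upto t d S s k c \<and>
     (c (t, Suc k) \<longrightarrow> d < Suc k \<and> c (t, Suc k - d) \<or> (\<exists>u\<in>S. s u < Suc k \<and> c (u, Suc k - s u)))"
  unfolding covered_upto_def by (auto simp: atLeastAtMostSuc_conv)

lemma window_0 [simp]: "window d 0 = {}"
  by (auto simp: window_def)

lemma Suc_mem_window: "1 \<le> d \<Longrightarrow> Suc k \<in> window d (Suc k)"
  by (simp add: window_def)

lemma window_prev:
  assumes "1 \<le> d"
  shows "window d k = (if d \<le> k then insert (Suc k - d) else id) (window d (Suc k) - {Suc k})"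
  using assms by (auto simp: window_def)

lemma potential_0 [simp]: "potential t d S s \<kappa> 0 c = 1"
  by (simp add: potential_def)

lemma potential_ge_indicator:
  "1 \<le> \<kappa> \<Longrightarrow> covered_upto t d S s k c \<Longrightarrow> 1 \<le> potential t d S s \<kappa> k c"
  unfolding potential_def by (auto intro!: prod_ge_1)

lemma potential_eq_prev:
  assumes "1 \<le> d"
  shows "potential t d S s \<kappa> k f = (if covered_upto t d S s k f then
      (if d \<le> k \<and> f (t, Suc k - d) then \<kappa> else 1) *
      (\<Prod>j\<in>window d (Suc k) - {Suc k}. if f (t, j) then \<kappa> else 1) else 0)"
proof (cases "d \<le> k")
  case True
  have "Suc k - d \<notin> window d (Suc k) - {Suc k}" by (auto simp: window_def)
  then show ?thesis
    using True by (simp add: potential_def window_prev[OF assms, where k = k])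
next
  case False
  then show ?thesis by (simp add: potential_def window_prev[OF assms, where k = k])
qed

lemma potential_Suc_merge:
  fixes f g :: "nat \<times> nat \<Rightarrow> bool" and s :: "nat \<Rightarrow> nat" and k :: nat
  assumes "t \<notin> S" "1 \<le> d"
  defines "h \<equiv> \<lambda>x. if x \<in> revealed t S s k then f x else g x"
  shows "potential t d S s \<kappa> (Suc k) h = (if covered_upto t d S s k f then
      (if g (t, Suc k) \<longrightarrow> (d \<le> k \<and> f (t, Suc k - d)) \<or>
          (\<exists>x\<in>(\<lambda>u. (u, Suc k - s u)) ` {u\<in>S. s u < Suc k}. g x)
       then (if g (t, Suc k) then \<kappa> else 1) *
         (\<Prod>j\<in>window d (Suc k) - {Suc k}. if f (t, j) then \<kappa> else 1)
       else 0) else 0)"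
proof -
  have h_old: "h x = f x" if "x \<in> revealed t S s k" for x
    using that by (simp add: h_def)
  have h_new: "h x = g x" if "x \<notin> revealed t S s k" for x
    using that by (simp add: h_def)
  have h_shift: "h (t, Suc k - d) = f (t, Suc k - d)" if "d \<le> k"
    using that assms(2) by (intro h_old) (auto simp: revealed_def)
  have h_other: "h (u, Suc k - s u) = g (u, Suc k - s u)" if "u \<in> S" "s u < Suc k" for u
    using that assms(1) by (intro h_new) (auto simp: revealed_def)
  have "covered_upto t d S s k h = covered_upto t d S s k f"
    by (rule covered_upto_cong) (simp add: h_old)
  moreover have "h (t, Suc k) = g (t, Suc k)"
    by (simp add: h_new revealed_def)
  moreover have "d < Suc k \<and> h (t, Suc k - d) \<longleftrightarrow> d \<le> k \<and> f (t, Suc k - d)"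
    using h_shift by (auto simp: less_Suc_eq_le)
  moreover have "(\<exists>u\<in>S. s u < Suc k \<and> h (u, Suc k - s u))
      \<longleftrightarrow> (\<exists>x\<in>(\<lambda>u. (u, Suc k - s u)) ` {u\<in>S. s u < Suc k}. g x)"
    using h_other by auto
  ultimately have covered: "covered_upto t d S s (Suc k) h \<longleftrightarrow> covered_upto t d S s k f \<and>
      (g (t, Suc k) \<longrightarrow> (d \<le> k \<and> f (t, Suc k - d)) \<or>
          (\<exists>x\<in>(\<lambda>u. (u, Suc k - s u)) ` {u\<in>S. s u < Suc k}. g x))"
    unfolding covered_upto_Suc by simp
  have "(\<Prod>j\<in>window d (Suc k) - {Suc k}. if h (t, j) then \<kappa> else 1)
      = (\<Prod>j\<in>window d (Suc k) - {Suc k}. if f (t, j) then \<kappa> else 1)"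
    by (intro prod.cong refl) (auto simp: h_old revealed_def window_def)
  then have "(\<Prod>j\<in>window d (Suc k). if h (t, j) then \<kappa> else 1)
      = (if g (t, Suc k) then \<kappa> else 1) *
        (\<Prod>j\<in>window d (Suc k) - {Suc k}. if f (t, j) then \<kappa> else 1)"
    by (subst prod.remove[OF finite_window Suc_mem_window[OF assms(2)]])
      (simp add: \<open>h (t, Suc k) = g (t, Suc k)\<close>)
  with covered show ?thesis
    unfolding potential_def by presburger
qed

lemma nn_integral_potential_Suc_le:
  fixes p :: real
  assumes S: "finite S" "t \<notin> S" and d: "1 \<le> d" and p: "0 \<le> p" "p < 1"
  defines "\<kappa> \<equiv> 1 / (1 - p * (1 - p) ^ card S)" and "\<mu> \<equiv> 1 - p * (1 - p) * (1 - p) ^ card S"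
  shows "(\<integral>\<^sup>+g. ennreal (potential t d S s \<kappa> (Suc k) (\<lambda>x. if x \<in> revealed t S s k then f x else g x))
      \<partial>Pi_pmf (revealed t S s (Suc k) - revealed t S s k) False (\<lambda>_. bernoulli_pmf p))
    \<le> ennreal \<mu> * ennreal (potential t d S s \<kappa> k f)"
proof -
  define N where "N = revealed t S s (Suc k) - revealed t S s k"
  define X where "X = (\<lambda>u. (u, Suc k - s u)) ` {u\<in>S. s u < Suc k}"
  define R where "R = (\<Prod>j\<in>window d (Suc k) - {Suc k}. if f (t, j) then \<kappa> else 1)"
  have q: "0 \<le> (1 - p) ^ card S" "(1 - p) ^ card S \<le> 1"
    using p by (auto simp: power_le_one)
  have \<kappa>: "1 \<le> \<kappa>" and \<mu>: "0 \<le> \<mu>"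
    using potential_weight_bounds[OF p q] by (simp_all add: \<kappa>_def \<mu>_def)
  have "card X \<le> card {u\<in>S. s u < Suc k}"
    unfolding X_def using S(1) by (intro card_image_le) auto
  also have "\<dots> \<le> card S"
    using S(1) by (intro card_mono) auto
  finally have q_le: "(1 - p) ^ card S \<le> (1 - p) ^ card X"
    using p by (intro power_decreasing) auto
  have N: "finite N" "(t, Suc k) \<in> N" "X \<subseteq> N" "(t, Suc k) \<notin> X"
    using S finite_revealed[OF S(1)] by (auto simp: N_def X_def revealed_def)
  have R: "0 \<le> R"
    unfolding R_def using \<kappa> by (intro prod_nonneg) auto
  show ?thesis
  proof (cases "covered_upto t d S s k f")
    case True
    have "(\<integral>\<^sup>+g. ennreal (potential t d S s \<kappa> (Suc k) (\<lambda>x. if x \<in> revealed t S s k then f x else g x))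
        \<partial>Pi_pmf N False (\<lambda>_. bernoulli_pmf p))
      = (\<integral>\<^sup>+g. ennreal (if g (t, Suc k) \<longrightarrow> (d \<le> k \<and> f (t, Suc k - d)) \<or> (\<exists>x\<in>X. g x)
          then (if g (t, Suc k) then \<kappa> else 1) * R else 0) \<partial>Pi_pmf N False (\<lambda>_. bernoulli_pmf p))"
      unfolding X_def R_def using True by (simp add: potential_Suc_merge[OF S(2) d])
    also have "\<dots> \<le> ennreal (\<mu> * ((if d \<le> k \<and> f (t, Suc k - d) then \<kappa> else 1) * R))"
      unfolding \<kappa>_def \<mu>_def by (rule nn_integral_potential_step_le[OF N p q(1) q_le R])
    also have "\<dots> = ennreal \<mu> * ennreal (potential t d S s \<kappa> k f)"
      using True \<mu> by (simp add: potential_eq_prev[OF d] R_def ennreal_mult')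
    finally show ?thesis by (simp add: N_def)
  next
    case False
    then show ?thesis
      by (simp add: potential_Suc_merge[OF S(2) d] potential_eq_prev[OF d, where k = k])
  qed
qed

lemma prob_covered_upto_le:
  fixes p :: real
  assumes J: "finite J" "revealed t S s n \<subseteq> J" and S: "finite S" "t \<notin> S"
    and d: "1 \<le> d" and p: "0 \<le> p" "p < 1"
  shows "measure_pmf.prob (Pi_pmf J False (\<lambda>_. bernoulli_pmf p)) {c. covered_upto t d S s n c}
    \<le> (1 - p * (1 - p) ^ Suc (card S)) ^ n"
proof -
  define \<kappa> where "\<kappa> = 1 / (1 - p * (1 - p) ^ card S)"
  define \<mu> where "\<mu> = 1 - p * (1 - p) * (1 - p) ^ card S"
  let ?B = "\<lambda>A. Pi_pmf A False (\<lambda>_. bernoulli_pmf p)"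
  let ?E = "{c. covered_upto t d S s n c}"
  have q: "0 \<le> (1 - p) ^ card S" "(1 - p) ^ card S \<le> 1"
    using p by (auto simp: power_le_one)
  have \<kappa>: "1 \<le> \<kappa>" and \<mu>: "0 \<le> \<mu>"
    using potential_weight_bounds[OF p q] by (simp_all add: \<kappa>_def \<mu>_def)
  have "?B (revealed t S s n) = map_pmf (\<lambda>c x. if x \<in> revealed t S s n then c x else False) (?B J)"
    using J by (intro Pi_pmf_subset) auto
  moreover have "covered_upto t d S s n (\<lambda>x. if x \<in> revealed t S s n then c x else False)
      \<longleftrightarrow> covered_upto t d S s n c" for c
    by (rule covered_upto_cong) simp
  ultimately have "measure_pmf.prob (?B J) ?E = measure_pmf.prob (?B (revealed t S s n)) ?E"
    by (simp add: vimage_def)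
  also have "ennreal \<dots> = (\<integral>\<^sup>+c. indicator ?E c \<partial>?B (revealed t S s n))"
    by (simp add: measure_pmf.emeasure_eq_measure)
  also have "\<dots> \<le> (\<integral>\<^sup>+c. ennreal (potential t d S s \<kappa> n c) \<partial>?B (revealed t S s n))"
    using potential_ge_indicator[OF \<kappa>] by (intro nn_integral_mono) (simp add: indicator_def)
  also have "\<dots> \<le> ennreal \<mu> ^ n"
  proof (rule nn_integral_Pi_pmf_chain_le[where Q = "revealed t S s"
        and \<Phi> = "\<lambda>k c. ennreal (potential t d S s \<kappa> k c)"])
    show "finite (revealed t S s k)" for k
      using S(1) by (rule finite_revealed)
    show "revealed t S s k \<subseteq> revealed t S s (Suc k)" for k
      by (rule revealed_mono)
    show "ennreal (potential t d S s \<kappa> 0 c) \<le> 1" for c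
      by simp
    show "(\<integral>\<^sup>+g. ennreal (potential t d S s \<kappa> (Suc k) (\<lambda>x. if x \<in> revealed t S s k then c x else g x))
        \<partial>?B (revealed t S s (Suc k) - revealed t S s k)) \<le> ennreal \<mu> * ennreal (potential t d S s \<kappa> k c)"
      for k c
      unfolding \<kappa>_def \<mu>_def by (rule nn_integral_potential_Suc_le[OF S d p])
  qed
  finally have "measure_pmf.prob (?B J) ?E \<le> \<mu> ^ n"
    using \<mu> by (simp add: ennreal_power)
  then show ?thesis
    by (simp add: \<mu>_def mult.assoc)
qed

lemma E_syn_subset_UN_covered_upto:
  "{c. E_syn M T n c} \<subseteq> (\<Union>t\<in>{1..T}. \<Union>d\<in>{1..n-1}. \<Union>S\<in>{S. S \<subseteq> {1..T} - {t} \<and> card S = M - 1}.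
      \<Union>s\<in>S \<rightarrow>\<^sub>E {0..n-1}. {c. covered_upto t d S s n c})"
proof
  fix c assume "c \<in> {c. E_syn M T n c}"
  then obtain t d S s where t: "t \<in> {1..T}" and d: "d \<in> {1..n-1}"
    and S: "S \<subseteq> {1..T} - {t}" "card S = M - 1" and s: "\<forall>u\<in>S. s u \<in> {0..n-1}"
    and cov: "covers n (\<lambda>i. shiftw d (\<lambda>j. c (t, j)) i \<or> bigor S (\<lambda>u. shiftw (s u) (\<lambda>j. c (u, j))) i)
      (\<lambda>j. c (t, j))"
    unfolding E_syn_def by blast
  have "restrict s S \<in> S \<rightarrow>\<^sub>E {0..n-1}" using s by auto
  moreover have "covered_upto t d S (restrict s S) n c"
    using cov unfolding covered_upto_def covers_def shiftw_def bigor_def by auto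
  ultimately show "c \<in> (\<Union>t\<in>{1..T}. \<Union>d\<in>{1..n-1}. \<Union>S\<in>{S. S \<subseteq> {1..T} - {t} \<and> card S = M - 1}.
      \<Union>s\<in>S \<rightarrow>\<^sub>E {0..n-1}. {c. covered_upto t d S s n c})"
    using t d S by blast
qed

lemma card_subsets_le_pow: "card {S. S \<subseteq> A \<and> card S = k} \<le> card A ^ k" if "finite A"
proof (cases "k \<le> card A")
  case True
  then show ?thesis using that by (simp add: n_subsets binomial_le_pow)
next
  case False
  then show ?thesis using that by (simp add: n_subsets binomial_eq_0)
qed

lemma prob_E_syn_le:
  assumes "1 \<le> M" "1 \<le> n" "0 \<le> B"
    and config: "\<And>t d S s. t \<in> {1..T} \<Longrightarrow> d \<in> {1..n-1} \<Longrightarrow> S \<subseteq> {1..T} - {t} \<Longrightarrow>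
      card S = M - 1 \<Longrightarrow> measure_pmf.prob P {c. covered_upto t d S s n c} \<le> B"
  shows "measure_pmf.prob P {c. E_syn M T n c} \<le> real T ^ M * real n ^ M * B"
proof -
  define Ss where "Ss t = {S. S \<subseteq> {1..T} - {t} \<and> card S = M - 1}" for t
  have shifts: "measure_pmf.prob P (\<Union>s\<in>S \<rightarrow>\<^sub>E {0..n-1}. {c. covered_upto t d S s n c})
      \<le> real n ^ (M - 1) * B" if "t \<in> {1..T}" "d \<in> {1..n-1}" "S \<in> Ss t" for t d S
  proof (rule measure_pmf_prob_UN_le)
    have "finite S" using that(3) by (auto simp: Ss_def intro: finite_subset)
    then show "finite (S \<rightarrow>\<^sub>E {0..n-1})" "real (card (S \<rightarrow>\<^sub>E {0..n-1})) \<le> real n ^ (M - 1)"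
      using that(3) assms(2) by (simp_all add: finite_PiE card_PiE Ss_def)
    show "measure_pmf.prob P {c. covered_upto t d S s n c} \<le> B" for s
      using config that by (simp add: Ss_def)
  qed (use assms in auto)
  have sets: "measure_pmf.prob P (\<Union>S\<in>Ss t. \<Union>s\<in>S \<rightarrow>\<^sub>E {0..n-1}. {c. covered_upto t d S s n c})
      \<le> real T ^ (M - 1) * (real n ^ (M - 1) * B)" if "t \<in> {1..T}" "d \<in> {1..n-1}" for t d
  proof (rule measure_pmf_prob_UN_le)
    show "finite (Ss t)" by (simp add: Ss_def)
    have "card (Ss t) \<le> card ({1..T} - {t}) ^ (M - 1)"
      unfolding Ss_def by (intro card_subsets_le_pow) simp
    also have "\<dots> \<le> T ^ (M - 1)"
      using card_Diff1_le[of "{1..T}" t] by (intro power_mono) auto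
    finally show "real (card (Ss t)) \<le> real T ^ (M - 1)"
      by (simp flip: of_nat_power)
  qed (use shifts that assms in auto)
  have "measure_pmf.prob P {c. E_syn M T n c}
      \<le> measure_pmf.prob P (\<Union>t\<in>{1..T}. \<Union>d\<in>{1..n-1}. \<Union>S\<in>Ss t.
          \<Union>s\<in>S \<rightarrow>\<^sub>E {0..n-1}. {c. covered_upto t d S s n c})"
    unfolding Ss_def by (intro measure_pmf.finite_measure_mono E_syn_subset_UN_covered_upto) simp
  also have "\<dots> \<le> real T * (real n * (real T ^ (M - 1) * (real n ^ (M - 1) * B)))"
  proof (rule measure_pmf_prob_UN_le)
    show "measure_pmf.prob P (\<Union>d\<in>{1..n-1}. \<Union>S\<in>Ss t. \<Union>s\<in>S \<rightarrow>\<^sub>E {0..n-1}.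
        {c. covered_upto t d S s n c}) \<le> real n * (real T ^ (M - 1) * (real n ^ (M - 1) * B))"
      if "t \<in> {1..T}" for t
      by (rule measure_pmf_prob_UN_le) (use sets that assms in auto)
  qed (use assms in auto)
  also have "\<dots> = real T ^ M * real n ^ M * B"
    using assms(1) by (simp add: power_eq_if)
  finally show ?thesis .
qed

lemma exp_neg1_le_one_minus_inverse_Suc_pow: "exp (-1) \<le> (1 - 1 / (real M + 1)) ^ M"
proof (cases "M = 0")
  case True
  then show ?thesis by simp
next
  case False
  have le: "(1 + 1 / real M) ^ M \<le> exp 1"
    using exp_ge_one_plus_x_over_n_power_n[of M 1] False by simp
  have pos: "0 < (1 + 1 / real M) ^ M"
    by (intro zero_less_power add_pos_nonneg) auto
  have "1 - 1 / (real M + 1) = real M / (real M + 1)" "1 + 1 / real M = (real M + 1) / real M"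
    using False by (simp_all add: field_simps)
  then have "(1 - 1 / (real M + 1)) * (1 + 1 / real M) = 1"
    using False by simp
  then have inv: "(1 - 1 / (real M + 1)) ^ M * (1 + 1 / real M) ^ M = 1"
    by (simp flip: power_mult_distrib)
  have "exp (-1) = 1 / exp (1 :: real)"
    by (simp add: exp_minus inverse_eq_divide)
  also have "\<dots> \<le> 1 / (1 + 1 / real M) ^ M"
    using le pos by (intro divide_left_mono) auto
  also have "\<dots> = (1 - 1 / (real M + 1)) ^ M"
    using eq_divide_imp[OF _ inv] pos by (metis less_irrefl)
  finally show ?thesis .
qed

lemma one_minus_pow_le_exp:
  fixes a :: real
  assumes "a \<le> 1"
  shows "(1 - a) ^ n \<le> exp (- (real n * a))"
proof -
  have "(1 - a) ^ n \<le> exp (- a) ^ n"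
    using assms exp_ge_add_one_self[of "- a"] by (intro power_mono) auto
  then show ?thesis
    by (simp flip: exp_of_nat_mult)
qed

lemma prob_words_covered_upto_le:
  assumes "t \<in> {1..T}" "1 \<le> d" "S \<subseteq> {1..T} - {t}" "card S = M - 1" "1 \<le> M" "0 \<le> p" "p < 1"
  shows "measure_pmf.prob (words_pmf T n p) {c. covered_upto t d S s n c} \<le> (1 - p * (1 - p) ^ M) ^ n"
proof -
  have "revealed t S s n \<subseteq> {1..T} \<times> {1..n}"
    using assms(1,3) by (auto simp: revealed_def)
  moreover have "finite S"
    using assms(3) by (rule finite_subset) simp
  moreover have "Suc (card S) = M"
    using assms(4,5) by simp
  ultimately show ?thesis
    using prob_covered_upto_le[of "{1..T} \<times> {1..n}" t S s n d p] assms by (auto simp: words_pmf_def)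
qed

lemma one_minus_inverse_Suc_mul_pow_le_exp:
  fixes M n :: nat
  defines "p \<equiv> 1 / (real M + 1)"
  shows "(1 - p * (1 - p) ^ M) ^ n \<le> exp (- (real n / (real M + 1) * exp (-1)))"
proof -
  have p: "0 \<le> p" "p \<le> 1"
    by (simp_all add: p_def)
  then have "p * (1 - p) ^ M \<le> 1"
    by (intro mult_le_one power_le_one) auto
  then have "(1 - p * (1 - p) ^ M) ^ n \<le> exp (- (real n * (p * (1 - p) ^ M)))"
    by (rule one_minus_pow_le_exp)
  also have "\<dots> \<le> exp (- (real n * (p * exp (-1))))"
  proof -
    have "exp (-1) \<le> (1 - p) ^ M"
      unfolding p_def by (rule exp_neg1_le_one_minus_inverse_Suc_pow)
    then have "p * exp (-1) \<le> p * (1 - p) ^ M"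
      using p(1) by (rule mult_left_mono)
    then show ?thesis
      by (intro exp_mono) (simp add: mult_left_mono)
  qed
  finally show ?thesis
    by (simp add: p_def)
qed

theorem mainTheorem6:
  fixes M T n :: nat
  assumes "M \<ge> 1" and "T \<ge> M" and "n \<ge> 2"
  shows "measure_pmf.prob (words_pmf T n (1 / (real M + 1))) {c. E_syn M T n c}
     \<le> exp (real M * ln (real T) + real M * ln (real n) - real n / (real M + 1) * exp (-1))"
proof -
  define p where "p = 1 / (real M + 1)"
  define B where "B = (1 - p * (1 - p) ^ M) ^ n"
  have p: "0 \<le> p" "p < 1"
    using assms(1) by (auto simp: p_def)
  then have "0 \<le> B"
    unfolding B_def by (intro zero_le_power) (simp add: mult_le_one power_le_one)
  then have "measure_pmf.prob (words_pmf T n p) {c. E_syn M T n c} \<le> real T ^ M * real n ^ M * B"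
    using assms p prob_words_covered_upto_le[of _ T _ _ M p n]
    by (intro prob_E_syn_le) (auto simp: B_def)
  also have "\<dots> \<le> real T ^ M * real n ^ M * exp (- (real n / (real M + 1) * exp (-1)))"
    using one_minus_inverse_Suc_mul_pow_le_exp[of M n] by (intro mult_left_mono) (simp_all add: B_def p_def)
  also have "\<dots> = exp (real M * ln (real T) + real M * ln (real n) - real n / (real M + 1) * exp (-1))"
    using assms by (simp add: exp_add exp_diff exp_minus exp_of_nat_mult divide_inverse)
  finally show ?thesis
    by (simp add: p_def)
qed

end
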